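(* Let $p(x_1,\dots,x_n)\in S_n(\emptyset)$ be a type of $\mathrm{Th}(M_{[0,1]})$. Then $p$ is implied by $\bigcup_{i<j}p{\upharpoonright}_{x_ix_j}$, where $p{\upharpoonright}_{x_ix_j}$ is the restriction of $p$ to the variables $x_i,x_j$. More generally, if $(a_1,\dots,a_n)\in[0,1]^n$ is such that $(a_i,a_j)\in\mathrm{im}(p{\upharpoonright}_{x_ix_j})$ for each $i<j$, then $(a_1,\dots,a_n)\in\mathrm{im}(p)$.
   Context: $M_{[0,1]}$ is the set of continuous nondecreasing functions $f:[0,1]\to[0,1]$ with $f(0)=0$, $f(1)=1$, with the sup metric, regarded as a metric structure in the language of binary predicates $\varphi_\alpha$ ($\alpha\in\mathbb{Q}\cap[0,1]$), where $\varphi_\alpha(f,g)=f(t)$ for any $t$ with $f(t)+g(t)=\alpha$. Every type $q\in S_m(\emptyset)$ is realized in $M_{[0,1]}$, and all realizations $(g_1,\dots,g_m)$ have the same image $\{(g_1(t),\dots,g_m(t)):t\in[0,1]\}$; this is denoted $\mathrm{im}(q)$. *)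

theory Defs
  imports Complex_Main
begin

definition M01 :: "(real \<Rightarrow> real) set" where
  "M01 = {f. continuous_on {0..1} f \<and> mono_on {0..1} f \<and> f ` {0..1} \<subseteq> {0..1}
            \<and> f 0 = 0 \<and> f 1 = 1}"

definition supdist :: "(real \<Rightarrow> real) \<Rightarrow> (real \<Rightarrow> real) \<Rightarrow> real" where
  "supdist f g = (SUP t\<in>{0..1}. \<bar>f t - g t\<bar>)"

definition phi :: "real \<Rightarrow> (real \<Rightarrow> real) \<Rightarrow> (real \<Rightarrow> real) \<Rightarrow> real" where
  "phi \<alpha> f g = f (SOME t. t \<in> {0..1} \<and> f t + g t = \<alpha>)"

datatype form =
    Dist nat nat
  | Phi rat nat nat
  | Zero
  | One
  | Neg form
  | Half form
  | Dotminus form form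
  | Sup nat form
  | Inf nat form

fun wf_form :: "form \<Rightarrow> bool" where
  "wf_form (Dist x y) = True"
| "wf_form (Phi a x y) = (0 \<le> a \<and> a \<le> 1)"
| "wf_form Zero = True"
| "wf_form One = True"
| "wf_form (Neg p) = wf_form p"
| "wf_form (Half p) = wf_form p"
| "wf_form (Dotminus p q) = (wf_form p \<and> wf_form q)"
| "wf_form (Sup x p) = wf_form p"
| "wf_form (Inf x p) = wf_form p"

fun fv :: "form \<Rightarrow> nat set" where
  "fv (Dist x y) = {x, y}"
| "fv (Phi a x y) = {x, y}"
| "fv Zero = {}"
| "fv One = {}"
| "fv (Neg p) = fv p"
| "fv (Half p) = fv p"
| "fv (Dotminus p q) = fv p \<union> fv q"
| "fv (Sup x p) = fv p - {x}"
| "fv (Inf x p) = fv p - {x}"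

fun eval :: "(nat \<Rightarrow> real \<Rightarrow> real) \<Rightarrow> form \<Rightarrow> real" where
  "eval \<sigma> (Dist x y) = supdist (\<sigma> x) (\<sigma> y)"
| "eval \<sigma> (Phi a x y) = phi (of_rat a) (\<sigma> x) (\<sigma> y)"
| "eval \<sigma> Zero = 0"
| "eval \<sigma> One = 1"
| "eval \<sigma> (Neg p) = 1 - eval \<sigma> p"
| "eval \<sigma> (Half p) = eval \<sigma> p / 2"
| "eval \<sigma> (Dotminus p q) = max 0 (eval \<sigma> p - eval \<sigma> q)"
| "eval \<sigma> (Sup x p) = (SUP f\<in>M01. eval (\<sigma>(x := f)) p)"
| "eval \<sigma> (Inf x p) = (INF f\<in>M01. eval (\<sigma>(x := f)) p)"

text \<open>An n-tuple (g_0,...,g_{n-1}) of M_[0,1] (indices >= n irrelevant).\<close>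
definition tuple :: "nat \<Rightarrow> (nat \<Rightarrow> real \<Rightarrow> real) \<Rightarrow> bool" where
  "tuple n g \<longleftrightarrow> (\<forall>i<n. g i \<in> M01)"

text \<open>Two tuples have the same type in the variables V (i.e. the same restriction
  of their types to the variables in V).\<close>
definition same_type_on :: "nat set \<Rightarrow> (nat \<Rightarrow> real \<Rightarrow> real) \<Rightarrow> (nat \<Rightarrow> real \<Rightarrow> real) \<Rightarrow> bool" where
  "same_type_on V g h \<longleftrightarrow> (\<forall>\<phi>. wf_form \<phi> \<and> fv \<phi> \<subseteq> V \<longrightarrow> eval g \<phi> = eval h \<phi>)"

definition tuple_image :: "nat set \<Rightarrow> (nat \<Rightarrow> real \<Rightarrow> real) \<Rightarrow> (nat \<Rightarrow> real) set" where
  "tuple_image I g = {a. \<exists>t\<in>{0..1}. \<forall>i\<in>I. a i = g i t}"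

end

theory Submission
  imports Defs "HOL-Analysis.Analysis"
begin

text \<open>A realisation of a type is a monotone path from \<open>0\<close> to \<open>1\<close> in \<open>[0,1]\<^sup>n\<close>, so its image is
  a chain for the coordinatewise order. If each target coordinate \<open>a\<^sub>i\<close> is first reached at time
  \<open>l\<^sub>i\<close>, then pairwise realisability forces all coordinates to be right at the last of these
  times; this is the second claim. For the first, the 2-type of \<open>(x, y)\<close> determines its image:
  for rational \<open>\<alpha>\<close> the formula \<open>inf\<^sub>z min(1, d(z, y) + min(1, 2\<^sup>m \<phi>\<^sub>\<alpha>(z, x)))\<close> approximates the
  value of \<open>y\<close> at the first time \<open>x\<close> reaches \<open>\<alpha>\<close>. So tuples with pairwise equal 2-types have the
  same image, and tuples with the same image have the same type: reparametrising both by their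
  \<open>\<epsilon>\<close>-perturbed arc length makes them \<open>\<epsilon>\<close>-close in the sup metric, reparametrisation preserves
  the value of every formula, and formulas are Lipschitz for the sup metric.\<close>

lemma M01I:
  assumes "continuous_on {0..1} f" "\<And>s t. 0 \<le> s \<Longrightarrow> s \<le> t \<Longrightarrow> t \<le> 1 \<Longrightarrow> f s \<le> f t"
    "\<And>t. 0 \<le> t \<Longrightarrow> t \<le> 1 \<Longrightarrow> 0 \<le> f t \<and> f t \<le> 1" "f 0 = 0" "f 1 = 1"
  shows "f \<in> M01"
  using assms unfolding M01_def mono_on_def by auto

lemma M01_cont: "f \<in> M01 \<Longrightarrow> continuous_on {0..1} f"
  by (simp add: M01_def)

lemma M01_mono: "f \<in> M01 \<Longrightarrow> 0 \<le> s \<Longrightarrow> s \<le> t \<Longrightarrow> t \<le> 1 \<Longrightarrow> f s \<le> f t"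
  unfolding M01_def mono_on_def by auto

lemma M01_bounds: "f \<in> M01 \<Longrightarrow> t \<in> {0..1} \<Longrightarrow> 0 \<le> f t \<and> f t \<le> 1"
  unfolding M01_def image_subset_iff by auto

lemma M01_0: "f \<in> M01 \<Longrightarrow> f 0 = 0" and M01_1: "f \<in> M01 \<Longrightarrow> f 1 = 1"
  unfolding M01_def by auto

lemma M01_id: "(\<lambda>t. t) \<in> M01"
  by (rule M01I) (auto intro: continuous_intros)

lemma M01_nonempty: "M01 \<noteq> {}"
  using M01_id by blast

lemma M01_attains:
  assumes "f \<in> M01" "0 \<le> a" "a \<le> 1"
  shows "\<exists>t\<in>{0..1}. f t = a"
  using IVT'[of f 0 a 1] assms M01_0[OF assms(1)] M01_1[OF assms(1)] M01_cont[OF assms(1)] by auto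

lemma M01_sum_attains:
  assumes "f \<in> M01" "g \<in> M01" "0 \<le> \<alpha>" "\<alpha> \<le> 2"
  shows "\<exists>t\<in>{0..1}. f t + g t = \<alpha>"
proof -
  have "continuous_on {0..1} (\<lambda>t. f t + g t)"
    using M01_cont[OF assms(1)] M01_cont[OF assms(2)] by (intro continuous_intros)
  then show ?thesis
    using IVT'[of "\<lambda>t. f t + g t" 0 \<alpha> 1] assms
      M01_0[OF assms(1)] M01_1[OF assms(1)] M01_0[OF assms(2)] M01_1[OF assms(2)] by auto
qed

text \<open>Both summands are nondecreasing, so \<open>f\<close> is constant on each level set of \<open>f + g\<close>:
  the value of \<^const>\<open>phi\<close> does not depend on the choice made by SOME.\<close>
lemma phi_eq:
  assumes "f \<in> M01" "g \<in> M01" "t \<in> {0..1}" "f t + g t = \<alpha>"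
  shows "phi \<alpha> f g = f t"
proof -
  define s where "s = (SOME t. t \<in> {0..1} \<and> f t + g t = \<alpha>)"
  have s: "s \<in> {0..1}" "f s + g s = \<alpha>"
    unfolding s_def using someI_ex[of "\<lambda>t. t \<in> {0..1} \<and> f t + g t = \<alpha>"] assms(3,4) by blast+
  have "f s = f t"
  proof (cases "s \<le> t")
    case True
    then have "f s \<le> f t" "g s \<le> g t" using assms s M01_mono by auto
    then show ?thesis using assms(4) s(2) by linarith
  next
    case False
    then have "f t \<le> f s" "g t \<le> g s" using assms s M01_mono by auto
    then show ?thesis using assms(4) s(2) by linarith
  qed
  then show ?thesis unfolding phi_def s_def[symmetric] by simp
qed

lemma phi_bounds:
  assumes "f \<in> M01" "g \<in> M01" "0 \<le> \<alpha>" "\<alpha> \<le> 2"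
  shows "0 \<le> phi \<alpha> f g \<and> phi \<alpha> f g \<le> 1"
proof -
  obtain t where "t \<in> {0..1}" "f t + g t = \<alpha>" using M01_sum_attains[OF assms] by blast
  then show ?thesis using phi_eq[OF assms(1,2)] M01_bounds[OF assms(1)] by simp
qed

lemma of_rat_le_2: "a \<le> 1 \<Longrightarrow> real_of_rat a \<le> 2"
  by (metis of_rat_1 of_rat_less_eq one_le_numeral order_trans)

lemma abs_le_supdist:
  assumes "f \<in> M01" "g \<in> M01" "t \<in> {0..1}"
  shows "\<bar>f t - g t\<bar> \<le> supdist f g"
  unfolding supdist_def
proof (rule cSUP_upper[OF assms(3)])
  show "bdd_above ((\<lambda>t. \<bar>f t - g t\<bar>) ` {0..1})"
    using M01_bounds[OF assms(1)] M01_bounds[OF assms(2)] by (intro bdd_aboveI[of _ 1]) fastforce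
qed

lemma supdist_le:
  assumes "\<And>t. t \<in> {0..1} \<Longrightarrow> \<bar>f t - g t\<bar> \<le> c"
  shows "supdist f g \<le> c"
  unfolding supdist_def by (rule cSUP_least) (use assms in auto)

lemma supdist_self: "supdist f f = 0"
  unfolding supdist_def by simp

lemma supdist_bounds:
  assumes "f \<in> M01" "g \<in> M01"
  shows "0 \<le> supdist f g \<and> supdist f g \<le> 1"
  using abs_le_supdist[OF assms, of 0] supdist_le[of f g 1] M01_bounds[OF assms(1)] M01_bounds[OF assms(2)]
  by fastforce


section \<open>Realising points of the image\<close>

lemma compact_unit_preimage:
  fixes f :: "real \<Rightarrow> real"
  assumes "continuous_on {0..1} f" "closed T"
  shows "compact ({0..1} \<inter> f -` T)"
proof -
  have "closed ({0..1} \<inter> f -` T)" by (rule continuous_closed_preimage[OF assms(1) closed_atLeastAtMost assms(2)])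
  moreover have "bounded ({0..1} \<inter> f -` T)" by (rule bounded_subset[OF bounded_closed_interval Int_lower1])
  ultimately show ?thesis by (simp add: compact_eq_bounded_closed)
qed

lemma M01_least_preimage:
  assumes f: "f \<in> M01" and a: "0 \<le> a" "a \<le> 1"
  shows "\<exists>l\<in>{0..1}. f l = a \<and> (\<forall>s\<in>{0..1}. f s = a \<longrightarrow> l \<le> s)"
proof -
  have "{0..1} \<inter> f -` {a} \<noteq> {}" using M01_attains[OF f a] by blast
  then obtain l where "l \<in> {0..1} \<inter> f -` {a}" "\<forall>s\<in>{0..1} \<inter> f -` {a}. l \<le> s"
    using compact_attains_inf[OF compact_unit_preimage[OF M01_cont[OF f] closed_singleton]] by blast
  then show ?thesis by auto
qed

lemma tuple_image_if_pairwise: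
  assumes g: "tuple n g" and a: "\<forall>i<n. a i \<in> {0..1}"
    and pw: "\<forall>i j. i < j \<and> j < n \<longrightarrow> a \<in> tuple_image {i, j} g"
  shows "a \<in> tuple_image {..<n} g"
proof (cases "n = 0")
  case True
  then show ?thesis unfolding tuple_image_def by auto
next
  case False
  have m: "\<And>i. i < n \<Longrightarrow> g i \<in> M01" using g unfolding tuple_def by auto
  have "\<forall>i. \<exists>l. i < n \<longrightarrow> l \<in> {0..1} \<and> g i l = a i \<and> (\<forall>s\<in>{0..1}. g i s = a i \<longrightarrow> l \<le> s)"
    using M01_least_preimage[OF m] a by (meson atLeastAtMost_iff)
  then obtain l where l: "\<And>i. i < n \<Longrightarrow> l i \<in> {0..1} \<and> g i (l i) = a i \<and> (\<forall>s\<in>{0..1}. g i s = a i \<longrightarrow> l i \<le> s)"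
    by metis
  define T where "T = Max (l ` {..<n})"
  have fin: "finite (l ` {..<n})" "l ` {..<n} \<noteq> {}" using False by auto
  obtain k where k: "k < n" "T = l k" using Max_in[OF fin] unfolding T_def by auto
  have T: "T \<in> {0..1}" using l k by auto
  have "a i = g i T" if i: "i < n" for i
  proof (cases "i = k")
    case False
    have "l i \<le> T" unfolding T_def using fin i by auto
    then have le: "a i \<le> g i T" using l[OF i] M01_mono[OF m[OF i], of "l i" T] T by auto
    have "a \<in> tuple_image {i, k} g"
      using pw[rule_format, of i k] pw[rule_format, of k i] i k(1) False
      by (cases "i < k") (auto simp: insert_commute)
    then obtain s where s: "s \<in> {0..1}" "a k = g k s" "a i = g i s"
      unfolding tuple_image_def by auto
    then have "g i T \<le> a i" using l[OF k(1)] k(2) M01_mono[OF m[OF i], of T s] T by auto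
    with le show ?thesis by simp
  qed (use l k in auto)
  then show ?thesis using T unfolding tuple_image_def by blast
qed


section \<open>Types of pairs determine their images\<close>

definition fplus :: "form \<Rightarrow> form \<Rightarrow> form" where
  "fplus p q = Neg (Dotminus (Neg p) q)"

lemma fplus_simps [simp]:
  "fv (fplus p q) = fv p \<union> fv q" "wf_form (fplus p q) = (wf_form p \<and> wf_form q)"
  "eval \<sigma> (fplus p q) = min 1 (eval \<sigma> p + eval \<sigma> q)"
  unfolding fplus_def by auto

definition amplify :: "nat \<Rightarrow> form \<Rightarrow> form" where
  "amplify m p = ((\<lambda>r. fplus r r) ^^ m) p"

lemma amplify_simps [simp]: "fv (amplify m p) = fv p" "wf_form (amplify m p) = wf_form p"
  unfolding amplify_def by (induction m) simp_all

lemma eval_amplify: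
  assumes "0 \<le> eval \<sigma> p" "eval \<sigma> p \<le> 1"
  shows "eval \<sigma> (amplify m p) = min 1 (2 ^ m * eval \<sigma> p)"
proof (induction m)
  case 0
  then show ?case using assms unfolding amplify_def by simp
next
  case (Suc m)
  then have "eval \<sigma> (amplify (Suc m) p) = min 1 (2 * min 1 (2 ^ m * eval \<sigma> p))"
    unfolding amplify_def by simp
  also have "\<dots> = min 1 (2 ^ Suc m * eval \<sigma> p)" using assms by (auto simp: min_def)
  finally show ?case .
qed

text \<open>For large \<open>m\<close>, the value of \<open>y\<close> at the first time \<open>x\<close> reaches \<open>\<alpha>\<close>, up to an error
  controlled by \<open>2\<^sup>-\<^sup>m\<close>.\<close>
definition level_value :: "nat \<Rightarrow> real \<Rightarrow> (real \<Rightarrow> real) \<Rightarrow> (real \<Rightarrow> real) \<Rightarrow> real" where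
  "level_value m \<alpha> x y = (INF f\<in>M01. min 1 (supdist f y + min 1 (2 ^ m * phi \<alpha> f x)))"

definition level_form :: "nat \<Rightarrow> rat \<Rightarrow> nat \<Rightarrow> nat \<Rightarrow> form" where
  "level_form m q i j = Inf (Suc (i + j)) (fplus (Dist (Suc (i + j)) j) (amplify m (Phi q (Suc (i + j)) i)))"

lemma level_form_fv: "fv (level_form m q i j) \<subseteq> {i, j}"
  unfolding level_form_def by auto

lemma level_form_wf: "0 \<le> q \<Longrightarrow> q \<le> 1 \<Longrightarrow> wf_form (level_form m q i j)"
  unfolding level_form_def by simp

lemma eval_level_form:
  assumes x: "\<sigma> i \<in> M01" and y: "\<sigma> j \<in> M01" and q: "0 \<le> q" "q \<le> 1"
  shows "eval \<sigma> (level_form m q i j) = level_value m (real_of_rat q) (\<sigma> i) (\<sigma> j)"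
proof -
  define z where "z = Suc (i + j)"
  have z: "z \<noteq> i" "z \<noteq> j" unfolding z_def by auto
  have "eval (\<sigma>(z := f)) (fplus (Dist z j) (amplify m (Phi q z i)))
      = min 1 (supdist f (\<sigma> j) + min 1 (2 ^ m * phi (real_of_rat q) f (\<sigma> i)))" if f: "f \<in> M01" for f
    using z eval_amplify[of "\<sigma>(z := f)" "Phi q z i" m] phi_bounds[OF f x] q by (simp add: of_rat_le_2)
  then show ?thesis
    unfolding level_form_def z_def[symmetric] level_value_def by simp
qed

lemma M01_rescale_above:
  assumes y: "y \<in> M01" and c: "0 \<le> c" "c < 1"
  defines "f \<equiv> \<lambda>t. max 0 ((y t - c) / (1 - c))"
  shows "f \<in> M01" "supdist f y \<le> c"
proof -
  show "f \<in> M01"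
  proof (rule M01I)
    show "continuous_on {0..1} f" unfolding f_def
      by (intro continuous_intros M01_cont[OF y]) (use c in simp)
    show "f s \<le> f t" if "0 \<le> s" "s \<le> t" "t \<le> 1" for s t
      using M01_mono[OF y that] c unfolding f_def by (intro max.mono) (simp_all add: divide_right_mono)
    show "0 \<le> f t \<and> f t \<le> 1" if "0 \<le> t" "t \<le> 1" for t
      using M01_bounds[OF y] that c unfolding f_def by (simp add: divide_le_eq)
    show "f 0 = 0" "f 1 = 1" unfolding f_def using M01_0[OF y] M01_1[OF y] c
      by (simp_all add: divide_le_0_iff)
  qed
  show "supdist f y \<le> c"
  proof (rule supdist_le)
    fix t :: real assume t: "t \<in> {0..1}"
    have yt: "0 \<le> y t" "y t \<le> 1" using M01_bounds[OF y t] by auto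
    show "\<bar>f t - y t\<bar> \<le> c"
    proof (cases "y t \<le> c")
      case True
      then have "f t = 0" unfolding f_def using c by (simp add: divide_le_0_iff)
      then show ?thesis using True yt by simp
    next
      case False
      then have "f t = (y t - c) / (1 - c)" unfolding f_def using c by simp
      moreover have "y t - (y t - c) / (1 - c) = c * (1 - y t) / (1 - c)"
        using c by (simp add: field_simps)
      moreover have "c * (1 - y t) \<le> c * (1 - c)" using c False by (intro mult_left_mono) auto
      then have "c * (1 - y t) / (1 - c) \<le> c" using c by (simp add: divide_le_eq)
      moreover have "0 \<le> c * (1 - y t) / (1 - c)" using c yt by simp
      ultimately show ?thesis by (simp add: abs_le_iff)
    qed
  qed
qed

lemma level_value_upper:
  assumes x: "x \<in> M01" and y: "y \<in> M01" and \<alpha>: "0 \<le> \<alpha>" "\<alpha> \<le> 1"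
    and t0: "t0 \<in> {0..1}" "x t0 = \<alpha>"
  shows "level_value m \<alpha> x y \<le> y t0"
proof -
  let ?V = "\<lambda>f. min 1 (supdist f y + min 1 (2 ^ m * phi \<alpha> f x))"
  have bdd: "bdd_below (?V ` M01)"
    using supdist_bounds[OF _ y] phi_bounds[OF _ x] \<alpha> by (intro bdd_belowI[of _ 0]) auto
  have le_V: "level_value m \<alpha> x y \<le> ?V f" if "f \<in> M01" for f
    unfolding level_value_def by (rule cINF_lower[OF bdd that])
  show ?thesis
  proof (cases "y t0 = 1")
    case True
    then show ?thesis using le_V[OF M01_id] by simp
  next
    case False
    then have c: "0 \<le> y t0" "y t0 < 1" using M01_bounds[OF y t0(1)] by auto
    define f where "f = (\<lambda>t. max 0 ((y t - y t0) / (1 - y t0)))"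
    have f: "f \<in> M01" and d: "supdist f y \<le> y t0"
      using M01_rescale_above[OF y c] unfolding f_def by auto
    have "f t0 = 0" unfolding f_def by simp
    then have "phi \<alpha> f x = 0" using phi_eq[OF f x t0(1)] t0 by simp
    then have "?V f \<le> y t0" using d by simp
    then show ?thesis using le_V[OF f] by linarith
  qed
qed

lemma level_value_lower:
  assumes x: "x \<in> M01" and y: "y \<in> M01" and \<alpha>: "0 \<le> \<alpha>" "\<alpha> \<le> 1"
    and t: "t \<in> {0..1}" and big: "1 \<le> 2 ^ m * (\<alpha> - x t)"
  shows "y t \<le> level_value m \<alpha> x y"
  unfolding level_value_def
proof (rule cINF_greatest[OF M01_nonempty])
  fix f assume f: "f \<in> M01"
  have "\<alpha> \<le> 2" using \<alpha> by simp
  then obtain t1 where t1: "t1 \<in> {0..1}" "f t1 + x t1 = \<alpha>" using M01_sum_attains[OF f x \<alpha>(1)] by blast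
  have ph: "phi \<alpha> f x = f t1" by (rule phi_eq[OF f x t1])
  have yt: "0 \<le> y t" "y t \<le> 1" using M01_bounds[OF y t] by auto
  have d: "0 \<le> supdist f y" using supdist_bounds[OF f y] by simp
  show "y t \<le> min 1 (supdist f y + min 1 (2 ^ m * phi \<alpha> f x))"
  proof (cases "f t1 < \<alpha> - x t")
    case True
    then have "x t < x t1" using t1 by simp
    then have "t \<le> t1" using M01_mono[OF x, of t1 t] t t1(1) by force
    then have "f t \<le> f t1" using M01_mono[OF f] t t1(1) by simp
    moreover have "y t - f t \<le> supdist f y" using abs_le_supdist[OF f y t] by (simp add: abs_le_iff)
    moreover have "f t1 \<le> min 1 (2 ^ m * phi \<alpha> f x)"
      using mult_right_mono[of 1 "2 ^ m" "f t1"] M01_bounds[OF f t1(1)] ph by simp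
    ultimately have "y t \<le> supdist f y + min 1 (2 ^ m * phi \<alpha> f x)" by linarith
    then show ?thesis using yt by simp
  next
    case False
    then have "2 ^ m * (\<alpha> - x t) \<le> 2 ^ m * f t1" by (intro mult_left_mono) auto
    then have "1 \<le> 2 ^ m * phi \<alpha> f x" using big unfolding ph by linarith
    then show ?thesis using yt d by simp
  qed
qed

lemma same_type_pair_le:
  assumes g: "g i \<in> M01" "g j \<in> M01" and h: "h i \<in> M01" "h j \<in> M01"
    and st: "same_type_on {i, j} g h" and t: "t \<in> {0..1}" and s: "s \<in> {0..1}"
    and lt: "h i s < g i t"
  shows "h j s \<le> g j t"
proof -
  obtain q where q: "h i s < real_of_rat q" "real_of_rat q < g i t" using of_rat_dense[OF lt] by blast
  define \<alpha> where "\<alpha> = real_of_rat q"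
  have "0 \<le> h i s" "g i t \<le> 1" using M01_bounds[OF h(1) s] M01_bounds[OF g(1) t] by auto
  then have \<alpha>: "0 \<le> \<alpha>" "\<alpha> \<le> 1" using q unfolding \<alpha>_def by linarith+
  then have q01: "0 \<le> q" "q \<le> 1" unfolding \<alpha>_def by simp_all
  obtain t0 where t0: "t0 \<in> {0..1}" "g i t0 = \<alpha>" using M01_attains[OF g(1) \<alpha>] by blast
  have "t0 \<le> t" using M01_mono[OF g(1), of t t0] t t0 q unfolding \<alpha>_def by force
  then have gt0: "g j t0 \<le> g j t" using M01_mono[OF g(2), of t0 t] t t0 by auto
  obtain m where "1 / (\<alpha> - h i s) < 2 ^ m" using real_arch_pow[of 2 "1 / (\<alpha> - h i s)"] by auto
  then have big: "1 \<le> 2 ^ m * (\<alpha> - h i s)" using q unfolding \<alpha>_def by (simp add: divide_less_eq)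
  have "eval g (level_form m q i j) = eval h (level_form m q i j)"
    using st level_form_wf[OF q01] level_form_fv unfolding same_type_on_def by blast
  then have "level_value m \<alpha> (g i) (g j) = level_value m \<alpha> (h i) (h j)"
    using eval_level_form[OF g q01] eval_level_form[OF h q01] unfolding \<alpha>_def by simp
  then show ?thesis
    using level_value_upper[OF g \<alpha> t0, where m = m] level_value_lower[OF h \<alpha> s big] gt0 by linarith
qed

lemma M01_below_right:
  assumes f: "f \<in> M01" and s: "s \<in> {0..1}" "s < 1" and lt: "f s < a"
  shows "\<exists>r\<in>{0..1}. s < r \<and> f r < a"
proof -
  obtain d where d: "d > 0" "\<forall>r\<in>{0..1}. dist r s < d \<longrightarrow> dist (f r) (f s) < a - f s"
    using M01_cont[OF f] s(1) lt unfolding continuous_on_iff by (metis diff_gt_0_iff_gt)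
  define r where "r = min 1 (s + d / 2)"
  have "r \<in> {0..1}" "s < r" "dist r s < d" using s d unfolding r_def dist_real_def by auto
  then show ?thesis using d(2) unfolding dist_real_def by force
qed

lemma M01_pair_attains:
  assumes x: "x \<in> M01" and y: "y \<in> M01" and a: "0 \<le> a" "a \<le> 1" and b: "0 \<le> b" "b \<le> 1"
    and xy: "\<And>r. r \<in> {0..1} \<Longrightarrow> x r < a \<Longrightarrow> y r \<le> b"
    and yx: "\<And>r. r \<in> {0..1} \<Longrightarrow> y r < b \<Longrightarrow> x r \<le> a"
  shows "\<exists>s\<in>{0..1}. x s = a \<and> y s = b"
proof -
  define A where "A = ({0..1} \<inter> x -` {..a}) \<inter> ({0..1} \<inter> y -` {..b})"
  have "compact A" unfolding A_def
    by (intro compact_Int compact_unit_preimage M01_cont x y closed_atMost)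
  moreover have "0 \<in> A" unfolding A_def using M01_0[OF x] M01_0[OF y] a b by simp
  ultimately obtain s where s: "s \<in> A" "\<And>r. r \<in> A \<Longrightarrow> r \<le> s"
    using compact_attains_sup[of A] by blast
  text \<open>At the last time \<open>s\<close> with \<open>x \<le> a\<close> and \<open>y \<le> b\<close>, both must be equalities: otherwise the
    strict one persists a little longer, the hypotheses keep the other below its bound, and
    \<open>s\<close> was not the last such time.\<close>
  have reach: "a' \<le> x' s"
    if x': "x' \<in> M01" and a': "a' \<le> 1" and x'y': "\<And>r. r \<in> {0..1} \<Longrightarrow> x' r < a' \<Longrightarrow> y' r \<le> b'"
      and last: "\<And>r. r \<in> {0..1} \<Longrightarrow> x' r \<le> a' \<Longrightarrow> y' r \<le> b' \<Longrightarrow> r \<le> s"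
    for x' y' :: "real \<Rightarrow> real" and a' b'
  proof (rule ccontr)
    assume "\<not> a' \<le> x' s"
    moreover have "s \<in> {0..1}" using s(1) unfolding A_def by simp
    moreover have "s \<noteq> 1" using calculation M01_1[OF x'] a' by auto
    ultimately obtain r where "r \<in> {0..1}" "s < r" "x' r < a'"
      using M01_below_right[OF x'] by force
    then show False using x'y'[of r] last[of r] by force
  qed
  have "a \<le> x s" by (rule reach[OF x a(2) xy]) (use s(2) in \<open>auto simp: A_def\<close>)
  moreover have "b \<le> y s" by (rule reach[OF y b(2) yx]) (use s(2) in \<open>auto simp: A_def\<close>)
  ultimately show ?thesis using s(1) unfolding A_def by auto
qed

lemma tuple_image_pair_subset:
  assumes g: "g i \<in> M01" "g j \<in> M01" and h: "h i \<in> M01" "h j \<in> M01"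
    and st: "same_type_on {i, j} g h"
  shows "tuple_image {i, j} g \<subseteq> tuple_image {i, j} h"
proof
  fix a assume "a \<in> tuple_image {i, j} g"
  then obtain t where t: "t \<in> {0..1}" "a i = g i t" "a j = g j t" unfolding tuple_image_def by auto
  have st': "same_type_on {j, i} g h" using st by (simp add: insert_commute)
  have "\<exists>s\<in>{0..1}. h i s = a i \<and> h j s = a j"
  proof (rule M01_pair_attains[OF h])
    show "0 \<le> a i" "a i \<le> 1" "0 \<le> a j" "a j \<le> 1" using M01_bounds[OF g(1) t(1)] M01_bounds[OF g(2) t(1)] t by auto
    show "h j r \<le> a j" if "r \<in> {0..1}" "h i r < a i" for r
      using same_type_pair_le[OF g h st t(1) that(1)] that(2) t by simp
    show "h i r \<le> a i" if "r \<in> {0..1}" "h j r < a j" for r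
      using same_type_pair_le[OF g(2,1) h(2,1) st' t(1) that(1)] that(2) t by simp
  qed
  then obtain s where "s \<in> {0..1}" "h i s = a i" "h j s = a j" by blast
  then show "a \<in> tuple_image {i, j} h" unfolding tuple_image_def by (intro CollectI bexI[of _ s]) auto
qed

lemma same_type_sym: "same_type_on V g h \<Longrightarrow> same_type_on V h g"
  unfolding same_type_on_def by metis

lemma tuple_image_subset_if_pairwise_same_type:
  assumes g: "tuple n g" and h: "tuple n h"
    and st: "\<forall>i j. i < j \<and> j < n \<longrightarrow> same_type_on {i, j} g h"
  shows "tuple_image {..<n} h \<subseteq> tuple_image {..<n} g"
proof
  fix a assume a: "a \<in> tuple_image {..<n} h"
  have "a \<in> tuple_image {i, j} g" if ij: "i < j" "j < n" for i j
  proof -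
    have "a \<in> tuple_image {i, j} h" using a ij unfolding tuple_image_def by auto
    moreover have "same_type_on {i, j} h g" using st ij by (blast intro: same_type_sym)
    ultimately show ?thesis
      using tuple_image_pair_subset[of h i j g] g h ij unfolding tuple_def by auto
  qed
  moreover have "\<forall>i<n. a i \<in> {0..1}"
    using a h M01_bounds unfolding tuple_image_def tuple_def by fastforce
  ultimately show "a \<in> tuple_image {..<n} g" using tuple_image_if_pairwise[OF g] by blast
qed

section \<open>Formulas are Lipschitz for the sup metric\<close>

lemma SUP_INF_unit_bounds:
  fixes F :: "'a \<Rightarrow> real"
  assumes "S \<noteq> {}" "\<And>x. x \<in> S \<Longrightarrow> 0 \<le> F x \<and> F x \<le> 1"
  shows "0 \<le> (SUP x\<in>S. F x) \<and> (SUP x\<in>S. F x) \<le> 1" "0 \<le> (INF x\<in>S. F x) \<and> (INF x\<in>S. F x) \<le> 1"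
proof -
  obtain x where x: "x \<in> S" using assms(1) by blast
  have "bdd_above (F ` S)" "bdd_below (F ` S)"
    using assms(2) by (auto intro: bdd_aboveI[of _ 1] bdd_belowI[of _ 0])
  then have "F x \<le> (SUP x\<in>S. F x)" "(INF x\<in>S. F x) \<le> F x"
    using x by (auto intro: cSUP_upper cINF_lower)
  moreover have "(SUP x\<in>S. F x) \<le> 1" "0 \<le> (INF x\<in>S. F x)"
    using assms by (auto intro: cSUP_least cINF_greatest)
  ultimately show "0 \<le> (SUP x\<in>S. F x) \<and> (SUP x\<in>S. F x) \<le> 1" "0 \<le> (INF x\<in>S. F x) \<and> (INF x\<in>S. F x) \<le> 1"
    using assms(2)[OF x] by linarith+
qed

lemma eval_bounds:
  "wf_form \<phi> \<Longrightarrow> (\<And>i. i \<in> fv \<phi> \<Longrightarrow> \<sigma> i \<in> M01) \<Longrightarrow> 0 \<le> eval \<sigma> \<phi> \<and> eval \<sigma> \<phi> \<le> 1"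
proof (induction \<phi> arbitrary: \<sigma>)
  case (Dist x y)
  then show ?case using supdist_bounds by simp
next
  case (Phi a x y)
  then show ?case by (simp add: phi_bounds of_rat_le_2)
next
  case (Neg p)
  have "0 \<le> eval \<sigma> p \<and> eval \<sigma> p \<le> 1" by (rule Neg.IH) (use Neg.prems in simp_all)
  then show ?case by simp
next
  case (Half p)
  have "0 \<le> eval \<sigma> p \<and> eval \<sigma> p \<le> 1" by (rule Half.IH) (use Half.prems in simp_all)
  then show ?case by simp
next
  case (Dotminus p q)
  have "0 \<le> eval \<sigma> p \<and> eval \<sigma> p \<le> 1" by (rule Dotminus.IH(1)) (use Dotminus.prems in simp_all)
  moreover have "0 \<le> eval \<sigma> q" by (rule Dotminus.IH(2)[THEN conjunct1]) (use Dotminus.prems in simp_all)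
  ultimately show ?case by simp
next
  case (Sup x p)
  then show ?case using SUP_INF_unit_bounds(1)[OF M01_nonempty] by simp
next
  case (Inf x p)
  then show ?case using SUP_INF_unit_bounds(2)[OF M01_nonempty] by simp
qed auto

lemma abs_SUP_INF_diff_le:
  fixes A B :: "'a \<Rightarrow> real"
  assumes "S \<noteq> {}" "bounded (A ` S)" "bounded (B ` S)" "\<And>x. x \<in> S \<Longrightarrow> \<bar>A x - B x\<bar> \<le> c"
  shows "\<bar>(SUP x\<in>S. A x) - (SUP x\<in>S. B x)\<bar> \<le> c" "\<bar>(INF x\<in>S. A x) - (INF x\<in>S. B x)\<bar> \<le> c"
proof -
  have A: "bdd_above (A ` S)" "bdd_below (A ` S)" and B: "bdd_above (B ` S)" "bdd_below (B ` S)"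
    using assms(2,3) by (simp_all add: bounded_imp_bdd_above bounded_imp_bdd_below)
  have "A x \<le> (SUP x\<in>S. B x) + c" "B x \<le> (SUP x\<in>S. A x) + c"
    "(INF x\<in>S. A x) - c \<le> B x" "(INF x\<in>S. B x) - c \<le> A x" if "x \<in> S" for x
    using assms(4)[OF that] cSUP_upper[OF that A(1)] cSUP_upper[OF that B(1)]
      cINF_lower[OF A(2) that] cINF_lower[OF B(2) that]
    unfolding abs_le_iff by linarith+
  then have le: "(SUP x\<in>S. A x) \<le> (SUP x\<in>S. B x) + c" "(SUP x\<in>S. B x) \<le> (SUP x\<in>S. A x) + c"
    "(INF x\<in>S. A x) - c \<le> (INF x\<in>S. B x)" "(INF x\<in>S. B x) - c \<le> (INF x\<in>S. A x)"
    using assms(1) by (auto intro!: cSUP_least cINF_greatest)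
  show "\<bar>(SUP x\<in>S. A x) - (SUP x\<in>S. B x)\<bar> \<le> c" "\<bar>(INF x\<in>S. A x) - (INF x\<in>S. B x)\<bar> \<le> c"
    using le by linarith+
qed

lemma bounded_eval_image:
  assumes "wf_form p" "\<And>i. i \<in> fv p - {x} \<Longrightarrow> \<sigma> i \<in> M01"
  shows "bounded ((\<lambda>f. eval (\<sigma>(x := f)) p) ` M01)"
proof (rule bounded_subset[OF bounded_closed_interval])
  show "(\<lambda>f. eval (\<sigma>(x := f)) p) ` M01 \<subseteq> {0..1}"
    using eval_bounds[OF assms(1)] assms(2) by fastforce
qed

lemma phi_lipschitz:
  assumes m: "f \<in> M01" "g \<in> M01" "f' \<in> M01" "g' \<in> M01" and \<alpha>: "0 \<le> \<alpha>" "\<alpha> \<le> 2"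
    and "supdist f f' \<le> \<delta>" "supdist g g' \<le> \<delta>"
  shows "\<bar>phi \<alpha> f g - phi \<alpha> f' g'\<bar> \<le> 3 * \<delta>"
proof -
  obtain t where t: "t \<in> {0..1}" "f t + g t = \<alpha>" using M01_sum_attains[OF m(1,2) \<alpha>] by blast
  obtain t' where t': "t' \<in> {0..1}" "f' t' + g' t' = \<alpha>" using M01_sum_attains[OF m(3,4) \<alpha>] by blast
  have close: "\<bar>f t' - f' t'\<bar> \<le> \<delta>" "\<bar>g t' - g' t'\<bar> \<le> \<delta>"
    using abs_le_supdist[OF m(1,3) t'(1)] abs_le_supdist[OF m(2,4) t'(1)] assms by linarith+
  have "\<bar>f t' - f t\<bar> \<le> 2 * \<delta>"
  proof (cases "t \<le> t'")
    case True
    then have "f t \<le> f t'" "g t \<le> g t'" using M01_mono m t t' by auto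
    then show ?thesis using close t t' by linarith
  next
    case False
    then have "f t' \<le> f t" "g t' \<le> g t" using M01_mono m t t' by auto
    then show ?thesis using close t t' by linarith
  qed
  then show ?thesis using phi_eq[OF m(1,2) t] phi_eq[OF m(3,4) t'] close by linarith
qed

lemma supdist_lipschitz:
  assumes m: "f \<in> M01" "g \<in> M01" "f' \<in> M01" "g' \<in> M01"
    and "supdist f f' \<le> \<delta>" "supdist g g' \<le> \<delta>"
  shows "\<bar>supdist f g - supdist f' g'\<bar> \<le> 2 * \<delta>"
proof -
  have close: "\<bar>f t - f' t\<bar> \<le> \<delta>" "\<bar>g t - g' t\<bar> \<le> \<delta>" if "t \<in> {0..1}" for t
    using abs_le_supdist[OF m(1,3) that] abs_le_supdist[OF m(2,4) that] assms by linarith+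
  have "supdist f g \<le> supdist f' g' + 2 * \<delta>"
    by (rule supdist_le) (use close abs_le_supdist[OF m(3,4)] in fastforce)
  moreover have "supdist f' g' \<le> supdist f g + 2 * \<delta>"
    by (rule supdist_le) (use close abs_le_supdist[OF m(1,2)] in fastforce)
  ultimately show ?thesis by linarith
qed

fun lipschitz_const :: "form \<Rightarrow> real" where
  "lipschitz_const (Dist x y) = 2"
| "lipschitz_const (Phi a x y) = 3"
| "lipschitz_const Zero = 0"
| "lipschitz_const form.One = 0"
| "lipschitz_const (Neg p) = lipschitz_const p"
| "lipschitz_const (Half p) = lipschitz_const p"
| "lipschitz_const (Dotminus p q) = lipschitz_const p + lipschitz_const q"
| "lipschitz_const (Sup x p) = lipschitz_const p"
| "lipschitz_const (Inf x p) = lipschitz_const p"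

lemma lipschitz_const_nonneg: "0 \<le> lipschitz_const \<phi>"
  by (induction \<phi>) auto

lemma eval_lipschitz:
  assumes "wf_form \<phi>" "0 \<le> \<delta>"
    and "\<And>i. i \<in> fv \<phi> \<Longrightarrow> \<sigma> i \<in> M01 \<and> \<tau> i \<in> M01 \<and> supdist (\<sigma> i) (\<tau> i) \<le> \<delta>"
  shows "\<bar>eval \<sigma> \<phi> - eval \<tau> \<phi>\<bar> \<le> lipschitz_const \<phi> * \<delta>"
  using assms
proof (induction \<phi> arbitrary: \<sigma> \<tau>)
  case (Dist x y)
  then show ?case using supdist_lipschitz by simp
next
  case (Phi a x y)
  then show ?case by (simp add: phi_lipschitz of_rat_le_2)
next
  case (Neg p)
  then have "\<bar>eval \<sigma> p - eval \<tau> p\<bar> \<le> lipschitz_const p * \<delta>" by simp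
  then show ?case by (simp add: abs_minus_commute)
next
  case (Half p)
  then have "\<bar>eval \<sigma> p - eval \<tau> p\<bar> \<le> lipschitz_const p * \<delta>" by simp
  moreover have "0 \<le> lipschitz_const p * \<delta>" using Half.prems(2) lipschitz_const_nonneg by simp
  ultimately show ?case by simp
next
  case (Dotminus p q)
  then have "\<bar>eval \<sigma> p - eval \<tau> p\<bar> \<le> lipschitz_const p * \<delta>" "\<bar>eval \<sigma> q - eval \<tau> q\<bar> \<le> lipschitz_const q * \<delta>"
    by simp_all
  then show ?case by (simp add: abs_le_iff max_def algebra_simps)
next
  case (Sup x p)
  have "\<bar>eval (\<sigma>(x := f)) p - eval (\<tau>(x := f)) p\<bar> \<le> lipschitz_const p * \<delta>" if "f \<in> M01" for f
    using Sup that by (simp add: supdist_self)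
  then show ?case
    using abs_SUP_INF_diff_le(1)[OF M01_nonempty bounded_eval_image bounded_eval_image] Sup.prems by simp
next
  case (Inf x p)
  have "\<bar>eval (\<sigma>(x := f)) p - eval (\<tau>(x := f)) p\<bar> \<le> lipschitz_const p * \<delta>" if "f \<in> M01" for f
    using Inf that by (simp add: supdist_self)
  then show ?case
    using abs_SUP_INF_diff_le(2)[OF M01_nonempty bounded_eval_image bounded_eval_image] Inf.prems by simp
qed auto

section \<open>Reparametrisation\<close>

definition increasing_homeo :: "(real \<Rightarrow> real) \<Rightarrow> (real \<Rightarrow> real) \<Rightarrow> bool" where
  "increasing_homeo \<sigma> \<rho> \<longleftrightarrow> homeomorphism {0..1} {0..1} \<sigma> \<rho> \<and> mono_on {0..1} \<sigma>"

lemma increasing_homeo_sym: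
  assumes "increasing_homeo \<sigma> \<rho>"
  shows "increasing_homeo \<rho> \<sigma>"
proof -
  have h: "homeomorphism {0..1} {0..1} \<sigma> \<rho>" and m: "mono_on {0..1} \<sigma>"
    using assms by (auto simp: increasing_homeo_def)
  have "mono_on {0..1} \<rho>"
  proof (rule mono_onI)
    fix s t :: real assume st: "s \<in> {0..1}" "t \<in> {0..1}" "s \<le> t"
    show "\<rho> s \<le> \<rho> t"
    proof (cases "s = t")
      case False
      then have "\<sigma> (\<rho> s) < \<sigma> (\<rho> t)" using st homeomorphism_apply2[OF h] by simp
      then show ?thesis
        using mono_on_invE[OF m] st homeomorphism_image2[OF h] by blast
    qed simp
  qed
  then show ?thesis using homeomorphism_symD[OF h] by (simp add: increasing_homeo_def)
qed

lemma increasing_homeo_apply: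
  assumes "increasing_homeo \<sigma> \<rho>" "t \<in> {0..1}"
  shows "\<sigma> t \<in> {0..1}" "\<rho> (\<sigma> t) = t" "\<sigma> (\<rho> t) = t"
proof -
  have h: "homeomorphism {0..1} {0..1} \<sigma> \<rho>" using assms(1) by (simp add: increasing_homeo_def)
  show "\<sigma> t \<in> {0..1}" using homeomorphism_image1[OF h] assms(2) by blast
  show "\<rho> (\<sigma> t) = t" by (rule homeomorphism_apply1[OF h assms(2)])
  show "\<sigma> (\<rho> t) = t" by (rule homeomorphism_apply2[OF h assms(2)])
qed

lemma increasing_homeo_mono:
  "increasing_homeo \<sigma> \<rho> \<Longrightarrow> s \<in> {0..1} \<Longrightarrow> t \<in> {0..1} \<Longrightarrow> s \<le> t \<Longrightarrow> \<sigma> s \<le> \<sigma> t"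
  unfolding increasing_homeo_def using mono_onD[of "{0..1}" \<sigma> s t] by blast

lemma increasing_homeo_endpoints:
  assumes "increasing_homeo \<sigma> \<rho>"
  shows "\<sigma> 0 = 0" "\<sigma> 1 = 1"
proof -
  have "\<rho> 0 \<in> {0..1}" "\<rho> 1 \<in> {0..1}"
    using increasing_homeo_apply(1)[OF increasing_homeo_sym[OF assms]] by simp_all
  then have "\<sigma> 0 \<le> \<sigma> (\<rho> 0)" "\<sigma> (\<rho> 1) \<le> \<sigma> 1"
    using increasing_homeo_mono[OF assms] by simp_all
  then show "\<sigma> 0 = 0" "\<sigma> 1 = 1"
    using increasing_homeo_apply[OF assms, of 0] increasing_homeo_apply[OF assms, of 1] by auto
qed

lemma increasing_homeo_compose:
  assumes "increasing_homeo \<sigma> \<rho>" "increasing_homeo \<sigma>' \<rho>'"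
  shows "increasing_homeo (\<sigma>' \<circ> \<sigma>) (\<rho> \<circ> \<rho>')"
proof -
  have "homeomorphism {0..1} {0..1} (\<sigma>' \<circ> \<sigma>) (\<rho> \<circ> \<rho>')"
    using assms homeomorphism_compose unfolding increasing_homeo_def by blast
  moreover have "mono_on {0..1} (\<sigma>' \<circ> \<sigma>)"
    using assms increasing_homeo_apply(1)[OF assms(1)]
    by (auto simp: increasing_homeo_def intro: monotone_on_o)
  ultimately show ?thesis by (simp add: increasing_homeo_def)
qed

lemma increasing_homeo_of_strict_mono:
  assumes "continuous_on {0..1} F" "strict_mono_on {0..1} F" "F 0 = 0" "F 1 = 1"
  shows "\<exists>G. increasing_homeo F G"
proof -
  have m: "mono_on {0..1} F" using assms(2) by (rule strict_mono_on_imp_mono_on)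
  have "F ` {0..1} \<subseteq> {0..1}"
    using mono_onD[OF m, of 0] mono_onD[OF m, of _ 1] assms(3,4) by auto
  moreover have "{0..1} \<subseteq> F ` {0..1}"
    using IVT'[of F 0 _ 1] assms(1,3,4) by (force simp: image_iff)
  ultimately obtain G where "homeomorphism {0..1} {0..1} F G"
    using homeomorphism_compact[OF compact_Icc assms(1) _ strict_mono_on_imp_inj_on[OF assms(2)]]
    by blast
  then show ?thesis using m unfolding increasing_homeo_def by blast
qed

text \<open>Functions in \<^const>\<open>M01\<close> are only constrained on \<open>[0,1]\<close>; leaving them unchanged
  outside makes reparametrisations exactly invertible.\<close>
definition reparam :: "(real \<Rightarrow> real) \<Rightarrow> (real \<Rightarrow> real) \<Rightarrow> real \<Rightarrow> real" where
  "reparam \<sigma> f t = (if t \<in> {0..1} then f (\<sigma> t) else f t)"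

lemma reparam_apply: "t \<in> {0..1} \<Longrightarrow> reparam \<sigma> f t = f (\<sigma> t)"
  by (simp add: reparam_def)

lemma reparam_M01:
  assumes h: "increasing_homeo \<sigma> \<rho>" and f: "f \<in> M01"
  shows "reparam \<sigma> f \<in> M01"
proof (rule M01I)
  have hom: "homeomorphism {0..1} {0..1} \<sigma> \<rho>" using h by (simp add: increasing_homeo_def)
  have "continuous_on {0..1} (f \<circ> \<sigma>)"
    by (rule continuous_on_compose[OF homeomorphism_cont1[OF hom]])
      (simp add: homeomorphism_image1[OF hom] M01_cont[OF f])
  then show "continuous_on {0..1} (reparam \<sigma> f)"
    by (rule continuous_on_cong[THEN iffD1, rotated 2]) (auto simp: reparam_def)
  show "reparam \<sigma> f s \<le> reparam \<sigma> f t" if "0 \<le> s" "s \<le> t" "t \<le> 1" for s t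
    using that M01_mono[OF f] increasing_homeo_mono[OF h, of s t] increasing_homeo_apply[OF h]
    by (simp add: reparam_def)
  show "0 \<le> reparam \<sigma> f t \<and> reparam \<sigma> f t \<le> 1" if "0 \<le> t" "t \<le> 1" for t
    using that M01_bounds[OF f] increasing_homeo_apply[OF h] by (simp add: reparam_def)
  show "reparam \<sigma> f 0 = 0" "reparam \<sigma> f 1 = 1"
    using increasing_homeo_endpoints[OF h] M01_0[OF f] M01_1[OF f] by (simp_all add: reparam_def)
qed

lemma reparam_reparam:
  assumes "increasing_homeo \<sigma> \<rho>"
  shows "reparam \<sigma> (reparam \<rho> f) = f"
  using increasing_homeo_apply[OF assms] by (auto simp: reparam_def fun_eq_iff)

lemma reparam_fun_upd:
  assumes "increasing_homeo \<sigma> \<rho>"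
  shows "(\<lambda>i. reparam \<sigma> (\<tau> i))(x := f) = (\<lambda>i. reparam \<sigma> ((\<tau>(x := reparam \<rho> f)) i))"
  using reparam_reparam[OF assms] by (auto simp: fun_eq_iff)

lemma reparam_image_M01:
  assumes h: "increasing_homeo \<sigma> \<rho>"
  shows "reparam \<rho> ` M01 = M01"
proof
  show "reparam \<rho> ` M01 \<subseteq> M01"
    using reparam_M01[OF increasing_homeo_sym[OF h]] by blast
  show "M01 \<subseteq> reparam \<rho> ` M01"
  proof
    fix f assume "f \<in> M01"
    then have "reparam \<sigma> f \<in> M01" by (rule reparam_M01[OF h])
    then show "f \<in> reparam \<rho> ` M01"
      using reparam_reparam[OF increasing_homeo_sym[OF h], of f] by (metis image_eqI)
  qed
qed

lemma supdist_reparam: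
  assumes h: "increasing_homeo \<sigma> \<rho>"
  shows "supdist (reparam \<sigma> f) (reparam \<sigma> g) = supdist f g"
proof -
  have im: "\<sigma> ` {0..1} = {0..1}"
    using h homeomorphism_image1 unfolding increasing_homeo_def by blast
  have "(\<lambda>t. \<bar>reparam \<sigma> f t - reparam \<sigma> g t\<bar>) ` {0..1} = (\<lambda>t. \<bar>f t - g t\<bar>) ` (\<sigma> ` {0..1})"
    by (auto simp: reparam_def image_iff)
  then show ?thesis unfolding supdist_def im by simp
qed

lemma phi_reparam:
  assumes h: "increasing_homeo \<sigma> \<rho>" and m: "f \<in> M01" "g \<in> M01" and \<alpha>: "0 \<le> \<alpha>" "\<alpha> \<le> 2"
  shows "phi \<alpha> (reparam \<sigma> f) (reparam \<sigma> g) = phi \<alpha> f g"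
proof -
  have m': "reparam \<sigma> f \<in> M01" "reparam \<sigma> g \<in> M01" using reparam_M01[OF h] m by auto
  obtain t where t: "t \<in> {0..1}" "reparam \<sigma> f t + reparam \<sigma> g t = \<alpha>"
    using M01_sum_attains[OF m' \<alpha>] by blast
  then have "f (\<sigma> t) + g (\<sigma> t) = \<alpha>" by (simp add: reparam_apply)
  then show ?thesis
    using phi_eq[OF m' t] phi_eq[OF m increasing_homeo_apply(1)[OF h t(1)]] t(1)
    by (simp add: reparam_apply)
qed

lemma eval_reparam:
  assumes h: "increasing_homeo \<sigma> \<rho>"
  shows "wf_form \<phi> \<Longrightarrow> (\<And>i. i \<in> fv \<phi> \<Longrightarrow> \<tau> i \<in> M01) \<Longrightarrow>
    eval (\<lambda>i. reparam \<sigma> (\<tau> i)) \<phi> = eval \<tau> \<phi>"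
proof (induction \<phi> arbitrary: \<tau>)
  case (Dist x y)
  show ?case using supdist_reparam[OF h] by simp
next
  case (Phi a x y)
  then show ?case by (simp add: phi_reparam[OF h] of_rat_le_2)
next
  case (Sup x p)
  have "eval ((\<lambda>i. reparam \<sigma> (\<tau> i))(x := f)) p = eval (\<tau>(x := reparam \<rho> f)) p" if "f \<in> M01" for f
    unfolding reparam_fun_upd[OF h]
    by (rule Sup.IH) (use Sup.prems reparam_M01[OF increasing_homeo_sym[OF h] that] in auto)
  then have "eval (\<lambda>i. reparam \<sigma> (\<tau> i)) (Sup x p) = (SUP f\<in>reparam \<rho> ` M01. eval (\<tau>(x := f)) p)"
    by (simp add: image_comp)
  then show ?case by (simp add: reparam_image_M01[OF h])
next
  case (Inf x p)
  have "eval ((\<lambda>i. reparam \<sigma> (\<tau> i))(x := f)) p = eval (\<tau>(x := reparam \<rho> f)) p" if "f \<in> M01" for f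
    unfolding reparam_fun_upd[OF h]
    by (rule Inf.IH) (use Inf.prems reparam_M01[OF increasing_homeo_sym[OF h] that] in auto)
  then have "eval (\<lambda>i. reparam \<sigma> (\<tau> i)) (Inf x p) = (INF f\<in>reparam \<rho> ` M01. eval (\<tau>(x := f)) p)"
    by (simp add: image_comp)
  then show ?case by (simp add: reparam_image_M01[OF h])
qed simp_all

section \<open>Tuples with the same image have the same type\<close>

text \<open>The \<open>\<ell>\<^sup>1\<close>-length of the monotone path \<open>g\<close> up to time \<open>t\<close>, made strictly increasing by
  the term \<open>\<epsilon> t\<close> and normalised to end at 1.\<close>
definition arc_param :: "real \<Rightarrow> nat \<Rightarrow> (nat \<Rightarrow> real \<Rightarrow> real) \<Rightarrow> real \<Rightarrow> real" where
  "arc_param \<epsilon> n g t = (\<epsilon> * t + (\<Sum>i<n. g i t)) / (\<epsilon> + real n)"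

lemma arc_param_increasing_homeo:
  assumes g: "tuple n g" and \<epsilon>: "0 < \<epsilon>"
  shows "\<exists>G. increasing_homeo (arc_param \<epsilon> n g) G"
proof (rule increasing_homeo_of_strict_mono)
  have m: "\<And>i. i < n \<Longrightarrow> g i \<in> M01" using g by (simp add: tuple_def)
  have pos: "0 < \<epsilon> + real n" using \<epsilon> by simp
  show "continuous_on {0..1} (arc_param \<epsilon> n g)"
    unfolding arc_param_def using pos m M01_cont by (intro continuous_intros) auto
  show "strict_mono_on {0..1} (arc_param \<epsilon> n g)"
  proof (rule strict_mono_onI)
    fix s t :: real assume st: "s \<in> {0..1}" "t \<in> {0..1}" "s < t"
    have "(\<Sum>i<n. g i s) \<le> (\<Sum>i<n. g i t)"
      using st m M01_mono by (intro sum_mono) auto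
    moreover have "\<epsilon> * s < \<epsilon> * t" using st \<epsilon> by simp
    ultimately show "arc_param \<epsilon> n g s < arc_param \<epsilon> n g t"
      unfolding arc_param_def using pos by (simp add: divide_strict_right_mono)
  qed
  have "(\<Sum>i<n. g i 0) = 0" by (intro sum.neutral) (simp add: m M01_0)
  then show "arc_param \<epsilon> n g 0 = 0" by (simp add: arc_param_def)
  have "(\<Sum>i<n. g i 1) = (\<Sum>i<n. 1)" by (intro sum.cong) (simp_all add: m M01_1)
  then show "arc_param \<epsilon> n g 1 = 1" using pos by (simp add: arc_param_def)
qed

lemma abs_le_abs_sum_same_sign:
  fixes d :: "'a \<Rightarrow> real"
  assumes "finite K" "i \<in> K" "(\<forall>k\<in>K. 0 \<le> d k) \<or> (\<forall>k\<in>K. d k \<le> 0)"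
  shows "\<bar>d i\<bar> \<le> \<bar>\<Sum>k\<in>K. d k\<bar>"
  using assms(3)
proof
  assume "\<forall>k\<in>K. 0 \<le> d k"
  then show ?thesis using member_le_sum[of i K d] assms(1,2) by (simp add: sum_nonneg)
next
  assume "\<forall>k\<in>K. d k \<le> 0"
  then show ?thesis using member_le_sum[of i K "\<lambda>k. - d k"] assms(1,2) by (simp add: sum_nonpos sum_negf)
qed

lemma arc_param_eq_imp_close:
  assumes g: "tuple n g" and \<epsilon>: "0 < \<epsilon>" and u: "u \<in> {0..1}" and t: "t \<in> {0..1}"
    and s: "s \<in> {0..1}" "\<And>k. k < n \<Longrightarrow> h k t = g k s"
    and eq: "arc_param \<epsilon> n g u = arc_param \<epsilon> n h t" and i: "i < n"
  shows "\<bar>g i u - h i t\<bar> \<le> \<epsilon>"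
proof -
  have "\<epsilon> * u + (\<Sum>k<n. g k u) = \<epsilon> * t + (\<Sum>k<n. h k t)"
    using eq \<epsilon> by (simp add: arc_param_def divide_cancel_right add_pos_nonneg)
  then have sum: "(\<Sum>k<n. g k u - g k s) = \<epsilon> * (t - u)"
    using s(2) by (simp add: sum_subtractf algebra_simps)
  have "(\<forall>k\<in>{..<n}. 0 \<le> g k u - g k s) \<or> (\<forall>k\<in>{..<n}. g k u - g k s \<le> 0)"
    using g u s(1) M01_mono by (cases "s \<le> u") (auto simp: tuple_def)
  then have "\<bar>g i u - g i s\<bar> \<le> \<bar>\<Sum>k<n. g k u - g k s\<bar>"
    using abs_le_abs_sum_same_sign[of "{..<n}" i "\<lambda>k. g k u - g k s"] i by simp
  also have "\<dots> = \<bar>\<epsilon> * (t - u)\<bar>" by (simp only: sum)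
  also have "\<dots> \<le> \<epsilon>"
    using u t \<epsilon> by (simp add: abs_mult abs_le_iff mult_le_cancel_left1)
  finally show ?thesis using s(2)[OF i] by simp
qed

lemma image_subset_imp_close_reparam:
  assumes g: "tuple n g" and h: "tuple n h"
    and im: "tuple_image {..<n} h \<subseteq> tuple_image {..<n} g" and \<epsilon>: "0 < \<epsilon>"
  shows "\<exists>\<sigma> \<rho>. increasing_homeo \<sigma> \<rho> \<and> (\<forall>i<n. supdist (reparam \<sigma> (g i)) (h i) \<le> \<epsilon>)"
proof -
  obtain G where G: "increasing_homeo (arc_param \<epsilon> n g) G"
    using arc_param_increasing_homeo[OF g \<epsilon>] by blast
  obtain H where H: "increasing_homeo (arc_param \<epsilon> n h) H"
    using arc_param_increasing_homeo[OF h \<epsilon>] by blast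
  define \<sigma> where "\<sigma> = G \<circ> arc_param \<epsilon> n h"
  have hom: "increasing_homeo \<sigma> (H \<circ> arc_param \<epsilon> n g)"
    unfolding \<sigma>_def by (rule increasing_homeo_compose[OF H increasing_homeo_sym[OF G]])
  have "\<bar>g i (\<sigma> t) - h i t\<bar> \<le> \<epsilon>" if i: "i < n" and t: "t \<in> {0..1}" for i t
  proof -
    have "(\<lambda>k. h k t) \<in> tuple_image {..<n} h" using t unfolding tuple_image_def by blast
    then have "(\<lambda>k. h k t) \<in> tuple_image {..<n} g" using im by blast
    then obtain s where s: "s \<in> {0..1}" "\<And>k. k < n \<Longrightarrow> h k t = g k s"
      unfolding tuple_image_def by auto
    have eq: "arc_param \<epsilon> n g (\<sigma> t) = arc_param \<epsilon> n h t"
      unfolding \<sigma>_def using increasing_homeo_apply(3)[OF G] increasing_homeo_apply(1)[OF H t] by simp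
    show ?thesis by (rule arc_param_eq_imp_close[OF g \<epsilon> increasing_homeo_apply(1)[OF hom t] t s eq i])
  qed
  then show ?thesis using hom by (force intro!: supdist_le simp: reparam_apply)
qed

lemma same_type_if_image_subset:
  assumes g: "tuple n g" and h: "tuple n h" and im: "tuple_image {..<n} h \<subseteq> tuple_image {..<n} g"
  shows "same_type_on {..<n} g h"
  unfolding same_type_on_def
proof (intro allI impI)
  fix \<phi> assume \<phi>: "wf_form \<phi> \<and> fv \<phi> \<subseteq> {..<n}"
  let ?L = "lipschitz_const \<phi>"
  have m: "\<And>i. i \<in> fv \<phi> \<Longrightarrow> g i \<in> M01 \<and> h i \<in> M01" using \<phi> g h by (auto simp: tuple_def)
  have approx: "\<bar>eval g \<phi> - eval h \<phi>\<bar> \<le> ?L * \<epsilon>" if \<epsilon>: "0 < \<epsilon>" for \<epsilon>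
  proof -
    obtain \<sigma> \<rho> where hom: "increasing_homeo \<sigma> \<rho>"
      and close: "\<forall>i<n. supdist (reparam \<sigma> (g i)) (h i) \<le> \<epsilon>"
      using image_subset_imp_close_reparam[OF g h im \<epsilon>] by blast
    have "eval g \<phi> = eval (\<lambda>i. reparam \<sigma> (g i)) \<phi>" using eval_reparam[OF hom] \<phi> m by simp
    also have "\<bar>\<dots> - eval h \<phi>\<bar> \<le> ?L * \<epsilon>"
      by (rule eval_lipschitz) (use \<phi> m close reparam_M01[OF hom] \<epsilon> in auto)
    finally show ?thesis .
  qed
  have "\<bar>eval g \<phi> - eval h \<phi>\<bar> \<le> 0"
  proof (rule field_le_epsilon)
    fix e :: real assume e: "0 < e"
    have L: "0 \<le> ?L" by (rule lipschitz_const_nonneg)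
    have "\<bar>eval g \<phi> - eval h \<phi>\<bar> \<le> ?L * (e / (?L + 1))"
      using approx[of "e / (?L + 1)"] L e by simp
    also have "\<dots> \<le> e" using L e by (simp add: field_simps)
    finally show "\<bar>eval g \<phi> - eval h \<phi>\<bar> \<le> 0 + e" by simp
  qed
  then show "eval g \<phi> = eval h \<phi>" by simp
qed

theorem mainTheorem17:
  fixes n :: nat and g :: "nat \<Rightarrow> real \<Rightarrow> real"
  assumes "tuple n g"
  shows "(\<forall>h. tuple n h \<and> (\<forall>i j. i < j \<and> j < n \<longrightarrow> same_type_on {i, j} g h)
              \<longrightarrow> same_type_on {..<n} g h)
       \<and> (\<forall>a :: nat \<Rightarrow> real. (\<forall>i<n. a i \<in> {0..1})
              \<and> (\<forall>i j. i < j \<and> j < n \<longrightarrow> (\<exists>t\<in>{0..1}. a i = g i t \<and> a j = g j t))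
              \<longrightarrow> (\<exists>t\<in>{0..1}. \<forall>i<n. a i = g i t))"
proof (intro conjI allI impI)
  fix h
  assume h: "tuple n h \<and> (\<forall>i j. i < j \<and> j < n \<longrightarrow> same_type_on {i, j} g h)"
  then have "tuple_image {..<n} h \<subseteq> tuple_image {..<n} g"
    using tuple_image_subset_if_pairwise_same_type[OF assms] by blast
  then show "same_type_on {..<n} g h" using same_type_if_image_subset[OF assms] h by blast
next
  fix a :: "nat \<Rightarrow> real"
  assume "(\<forall>i<n. a i \<in> {0..1})
    \<and> (\<forall>i j. i < j \<and> j < n \<longrightarrow> (\<exists>t\<in>{0..1}. a i = g i t \<and> a j = g j t))"
  then have "a \<in> tuple_image {..<n} g"
    using tuple_image_if_pairwise[OF assms] by (simp add: tuple_image_def)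
  then show "\<exists>t\<in>{0..1}. \<forall>i<n. a i = g i t" unfolding tuple_image_def by blast
qed

end
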